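(* Let $\alpha>1$, $d\in\mathbb N$, $1\ge\gamma_1\ge\dots\ge\gamma_d>0$, let $\boldsymbol x_1,\dots,\boldsymbol x_N\in[0,1]^d$, $c_1,\dots,c_N\in\mathbb R$, and let $K\subset\mathbb Z^d$ be finite. If $g\in H_{\alpha,\boldsymbol\gamma,d}$, then $g\phi_K\in H_{\alpha-\frac12-\delta,\boldsymbol\gamma,d}$ for every $\delta\in(0,\alpha-1)$, and $$\|g\phi_K\|_{H_{\alpha-\frac12-\delta,\boldsymbol\gamma,d}}\le\|g\|_{H_{\alpha,\boldsymbol\gamma,d}}\Big(\sum_{\boldsymbol k\in K}r_\alpha(\boldsymbol\gamma,\boldsymbol k)\Big)^{1/2}c_{\alpha,\boldsymbol\gamma,d}\,\zeta_{\delta,d}\,\overline\mu_N.$$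
   Context: For $\beta>0$, $\gamma>0$, $h\in\mathbb Z$: $r_\beta(\gamma,h)=\max(|h|^{2\beta}/\gamma,1)$, $r_\beta(\boldsymbol\gamma,\boldsymbol k)=\prod_{j=1}^d r_\beta(\gamma_j,k_j)$. $\omega_{\boldsymbol k}(\boldsymbol x)=\exp(2\pi i\,\boldsymbol k\cdot\boldsymbol x)$, $\widehat f_{\boldsymbol k}=\int_{[0,1]^d}f\,\overline{\omega_{\boldsymbol k}}$. Weighted Korobov space (for $\beta>1/2$): $H_{\beta,\boldsymbol\gamma,d}=\{f\in L_2([0,1]^d):\|f\|_{H_{\beta,\boldsymbol\gamma,d}}=(\sum_{\boldsymbol k\in\mathbb Z^d}r_\beta(\boldsymbol\gamma,\boldsymbol k)|\widehat f_{\boldsymbol k}|^2)^{1/2}<\infty\}$. Define $\phi_K(\boldsymbol x)=\sum_{\boldsymbol k\in K}\check\phi_{\boldsymbol k}\overline{\omega_{\boldsymbol k}(\boldsymbol x)}$ with $\check\phi_{\boldsymbol k}=\frac1N\sum_{n=1}^Nc_n\omega_{\boldsymbol k}(\boldsymbol x_n)$. Constants: $\overline\mu_N=\frac1N\sum_{n=1}^N|c_n|$, $c_{\alpha,\boldsymbol\gamma,d}=\sqrt{\prod_{j=1}^d\max(1,2^{2\alpha}\gamma_j)}$, $\zeta_{\delta,d}=[1+2\zeta(1+2\delta)]^{d/2}$ with $\zeta$ the Riemann zeta function. *)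

theory Defs
  imports "HOL-Analysis.Analysis"
begin

text \<open>Dimension d = CARD('d); vectors in R^d are real^'d, frequencies in Z^d are int^'d.
  The index type carries a linear order so that the monotonicity of the weights can be stated.\<close>

definition r1 :: "real \<Rightarrow> real \<Rightarrow> int \<Rightarrow> real" where
  "r1 \<beta> \<gamma> h = max ((real_of_int \<bar>h\<bar>) powr (2 * \<beta>) / \<gamma>) 1"

definition rw :: "real \<Rightarrow> real^'d \<Rightarrow> int^'d \<Rightarrow> real" where
  "rw \<beta> \<gamma> k = (\<Prod>j\<in>UNIV. r1 \<beta> (\<gamma>$j) (k$j))"

definition omega :: "int^'d \<Rightarrow> real^'d \<Rightarrow> complex" where
  "omega k x = exp (2 * pi * \<i> * complex_of_real (\<Sum>j\<in>UNIV. real_of_int (k$j) * x$j))"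

definition unit_cube :: "(real^'d) set" where
  "unit_cube = cbox 0 One"

definition fourier_coeff :: "(real^'d \<Rightarrow> complex) \<Rightarrow> int^'d \<Rightarrow> complex" where
  "fourier_coeff f k = (LINT x:unit_cube|lborel. f x * cnj (omega k x))"

definition L2_cube :: "(real^'d \<Rightarrow> complex) set" where
  "L2_cube = {f. set_borel_measurable lborel unit_cube f \<and>
                 set_integrable lborel unit_cube (\<lambda>x. (cmod (f x))^2)}"

definition korobov_space :: "real \<Rightarrow> real^'d \<Rightarrow> (real^'d \<Rightarrow> complex) set" where
  "korobov_space \<beta> \<gamma> = {f. f \<in> L2_cube \<and>
      (\<lambda>k. rw \<beta> \<gamma> k * (cmod (fourier_coeff f k))^2) summable_on UNIV}"

definition korobov_norm :: "real \<Rightarrow> real^'d \<Rightarrow> (real^'d \<Rightarrow> complex) \<Rightarrow> real" where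
  "korobov_norm \<beta> \<gamma> f = sqrt (\<Sum>\<^sub>\<infinity>k. rw \<beta> \<gamma> k * (cmod (fourier_coeff f k))^2)"

definition phi_check :: "nat \<Rightarrow> (nat \<Rightarrow> real^'d) \<Rightarrow> (nat \<Rightarrow> real) \<Rightarrow> int^'d \<Rightarrow> complex" where
  "phi_check N xs c k = (1 / of_nat N) * (\<Sum>n=1..N. complex_of_real (c n) * omega k (xs n))"

definition phiK :: "(int^'d) set \<Rightarrow> nat \<Rightarrow> (nat \<Rightarrow> real^'d) \<Rightarrow> (nat \<Rightarrow> real) \<Rightarrow> real^'d \<Rightarrow> complex" where
  "phiK K N xs c x = (\<Sum>k\<in>K. phi_check N xs c k * cnj (omega k x))"

definition mu_bar :: "nat \<Rightarrow> (nat \<Rightarrow> real) \<Rightarrow> real" where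
  "mu_bar N c = (1 / real N) * (\<Sum>n=1..N. \<bar>c n\<bar>)"

definition c_const :: "real \<Rightarrow> real^'d \<Rightarrow> real" where
  "c_const \<alpha> \<gamma> = sqrt (\<Prod>j\<in>UNIV. max 1 (2 powr (2 * \<alpha>) * \<gamma>$j))"

definition rzeta :: "real \<Rightarrow> real" where
  "rzeta s = (\<Sum>n. 1 / (real (Suc n)) powr s)"

definition zeta_const :: "real \<Rightarrow> nat \<Rightarrow> real" where
  "zeta_const \<delta> d = (1 + 2 * rzeta (1 + 2 * \<delta>)) powr (real d / 2)"

end

theory Submission
  imports Defs
begin

text \<open>
  The Fourier coefficient of g phi_K at m is the finite convolution
  sum_{k in K} phi_k g_{m+k}, and |phi_k| <= mu_bar. The weight is submultiplicative,
  r_alpha(m) <= c^2 r_alpha(m + k) r_alpha(k), so Cauchy-Schwarz over K bounds every weighted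
  coefficient r_alpha(m) |(g phi_K)_m|^2 by the same constant
  (||g|| (sum_K r_alpha)^(1/2) c mu_bar)^2. Lowering the smoothness to alpha - 1/2 - delta
  multiplies the weight by |m_j|^-(1 + 2 delta) in every nonzero coordinate; these factors
  sum over Z^d to (1 + 2 zeta(1 + 2 delta))^d = zeta_{delta,d}^2, and summing the uniform
  bound against them gives the claim.
\<close>

lemma rzeta_has_sum:
  assumes "s > 1"
  shows "((\<lambda>n. 1 / real (Suc n) powr s) has_sum rzeta s) UNIV"
proof -
  have "summable (\<lambda>n. real n powr (-s))"
    using assms by (simp add: summable_real_powr_iff)
  then have summable: "summable (\<lambda>n. 1 / real (Suc n) powr s)"
    by (subst (asm) summable_Suc_iff[symmetric]) (simp add: powr_minus divide_inverse)
  then have "(\<lambda>n. 1 / real (Suc n) powr s) sums rzeta s"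
    unfolding rzeta_def by (rule summable_sums)
  then show ?thesis
    using summable by (intro norm_summable_imp_has_sum) auto
qed

lemma rzeta_nonneg: "s > 1 \<Longrightarrow> 0 \<le> rzeta s"
  using has_sum_nonneg[OF rzeta_has_sum] by simp

definition power_decay :: "real \<Rightarrow> int \<Rightarrow> real" where
  "power_decay s h = (if h = 0 then 1 else real_of_int \<bar>h\<bar> powr -s)"

lemma power_decay_nonneg: "0 \<le> power_decay s h"
  by (simp add: power_decay_def)

lemma power_decay_has_sum:
  assumes "s > 1"
  shows "(power_decay s has_sum (1 + 2 * rzeta s)) UNIV"
proof -
  have pos: "(power_decay s has_sum rzeta s) {0<..}"
    using rzeta_has_sum[OF assms]
    by (subst has_sum_reindex_bij_witness[where j = "\<lambda>h. nat h - 1" and i = "\<lambda>n. int (Suc n)"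
        and T = UNIV and h = "\<lambda>n. 1 / real (Suc n) powr s" and s' = "rzeta s"])
       (auto simp: power_decay_def powr_minus divide_inverse)
  have neg: "(power_decay s has_sum rzeta s) {..<0}"
    using rzeta_has_sum[OF assms]
    by (subst has_sum_reindex_bij_witness[where j = "\<lambda>h. nat (-h) - 1" and i = "\<lambda>n. - int (Suc n)"
        and T = UNIV and h = "\<lambda>n. 1 / real (Suc n) powr s" and s' = "rzeta s"])
       (auto simp: power_decay_def powr_minus divide_inverse)
  have "(power_decay s has_sum (power_decay s 0 + (rzeta s + rzeta s))) (insert 0 ({0<..} \<union> {..<0}))"
    by (intro has_sum_insert has_sum_Un_disjoint pos neg) auto
  moreover have "insert 0 ({0<..} \<union> {..<0}) = (UNIV :: int set)"
    by auto
  ultimately show ?thesis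
    by (simp add: power_decay_def)
qed

lemma has_sum_prod_vec_nth:
  fixes f :: "'a \<Rightarrow> real"
  assumes nonneg: "\<And>x. 0 \<le> f x" and sum: "(f has_sum S) UNIV" and "S \<noteq> 0"
  shows "((\<lambda>v::'a^'d::finite. \<Prod>j\<in>UNIV. f (v$j)) has_sum S ^ CARD('d)) UNIV"
proof -
  have "(\<lambda>x. norm (f x)) summable_on UNIV"
    using sum nonneg by (simp add: has_sum_imp_summable)
  then have "infsum (\<lambda>g::'d \<Rightarrow> 'a. \<Prod>j\<in>UNIV. f (g j)) (PiE UNIV (\<lambda>_. UNIV)) = infsum f UNIV ^ CARD('d)"
    using infsum_prod_PiE_abs[of "UNIV :: 'd set" "\<lambda>_. f" "\<lambda>_. UNIV"] by simp
  then have infsum: "infsum (\<lambda>g::'d \<Rightarrow> 'a. \<Prod>j\<in>UNIV. f (g j)) UNIV = S ^ CARD('d)"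
    using infsumI[OF sum] by simp
  \<comment> \<open>an infinite sum that does not exist is 0 by convention, so a nonzero value proves summability\<close>
  then have "(\<lambda>g::'d \<Rightarrow> 'a. \<Prod>j\<in>UNIV. f (g j)) summable_on UNIV"
    using \<open>S \<noteq> 0\<close> infsum_not_exists by fastforce
  then have "((\<lambda>g::'d \<Rightarrow> 'a. \<Prod>j\<in>UNIV. f (g j)) has_sum S ^ CARD('d)) UNIV"
    using has_sum_infsum infsum by fastforce
  then show ?thesis
    by (subst has_sum_reindex_bij_witness[where j = vec_nth and i = vec_lambda and T = UNIV
          and h = "\<lambda>g. \<Prod>j\<in>UNIV. f (g j)" and s' = "S ^ CARD('d)"]) auto
qed

lemma one_le_r1: "1 \<le> r1 \<beta> \<gamma> h"
  by (simp add: r1_def)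

lemma r1_pos: "0 < r1 \<beta> \<gamma> h"
  using one_le_r1 less_le_trans zero_less_one by blast

lemma r1_ge_powr: "real_of_int \<bar>h\<bar> powr (2 * \<beta>) / \<gamma> \<le> r1 \<beta> \<gamma> h"
  by (simp add: r1_def)

lemma rw_nonneg [simp]: "0 \<le> rw \<beta> \<gamma> k"
  unfolding rw_def by (intro prod_nonneg less_imp_le r1_pos)

lemma r1_submult:
  assumes "\<alpha> > 0" "\<gamma> > 0"
  shows "r1 \<alpha> \<gamma> m \<le> max 1 (2 powr (2 * \<alpha>) * \<gamma>) * r1 \<alpha> \<gamma> (m + k) * r1 \<alpha> \<gamma> k"
    (is "_ \<le> ?M * ?R (m + k) * ?R k")
proof -
  have "1 \<le> ?M * ?R k" "1 \<le> ?M * ?R (m + k)"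
    by (intro mult_ge1_I one_le_r1; simp)+
  then have R_le: "?R (m + k) \<le> ?M * ?R (m + k) * ?R k" "?R k \<le> ?M * ?R (m + k) * ?R k"
    using mult_left_mono[of 1 "?M * ?R k" "?R (m + k)"] mult_left_mono[of 1 "?M * ?R (m + k)" "?R k"]
    by (simp_all add: less_imp_le[OF r1_pos] mult_ac)
  have "real_of_int \<bar>m\<bar> powr (2 * \<alpha>) / \<gamma> \<le> ?M * ?R (m + k) * ?R k"
  proof (cases "k = 0 \<or> m + k = 0")
    case True
    then have "k = 0 \<or> m = - k"
      by auto
    then have "?R m \<le> ?M * ?R (m + k) * ?R k"
      using R_le by (auto simp: r1_def)
    then show ?thesis
      using r1_ge_powr[of m \<alpha> \<gamma>] by linarith
  next
    case False
    define a where "a = real_of_int \<bar>m + k\<bar>"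
    define b where "b = real_of_int \<bar>k\<bar>"
    have "1 \<le> \<bar>m + k\<bar>" "1 \<le> \<bar>k\<bar>"
      using False by linarith+
    then have "a \<ge> 1" "b \<ge> 1"
      unfolding a_def b_def of_int_1_le_iff .
    have "real_of_int \<bar>m\<bar> \<le> a + b"
      unfolding a_def b_def by linarith
    also have "\<dots> \<le> 2 * (a * b)"
      using mult_nonneg_nonneg[of "a - 1" "b - 1"] mult_ge1_I[of a b] \<open>a \<ge> 1\<close> \<open>b \<ge> 1\<close>
      by (simp add: algebra_simps)
    finally have "real_of_int \<bar>m\<bar> powr (2 * \<alpha>) / \<gamma> \<le> (2 * (a * b)) powr (2 * \<alpha>) / \<gamma>"
      using assms by (intro divide_right_mono powr_mono2) auto
    also have "\<dots> = (2 powr (2 * \<alpha>) * \<gamma>) * (a powr (2 * \<alpha>) / \<gamma>) * (b powr (2 * \<alpha>) / \<gamma>)"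
      using assms \<open>a \<ge> 1\<close> \<open>b \<ge> 1\<close> by (simp add: powr_mult)
    also have "\<dots> \<le> ?M * ?R (m + k) * ?R k"
      unfolding a_def b_def
      by (intro mult_mono mult_nonneg_nonneg r1_ge_powr max.cobounded2)
        (simp_all add: assms less_imp_le[OF r1_pos] less_imp_le[OF assms(2)])
    finally show ?thesis .
  qed
  with R_le(2) one_le_r1[of \<alpha> \<gamma> k] show ?thesis
    unfolding r1_def[of \<alpha> \<gamma> m] by (intro max.boundedI) linarith+
qed

lemma rw_submult:
  assumes "\<alpha> > 0" "\<And>j. \<gamma>$j > 0"
  shows "rw \<alpha> \<gamma> m \<le> (\<Prod>j\<in>UNIV. max 1 (2 powr (2 * \<alpha>) * \<gamma>$j)) * rw \<alpha> \<gamma> (m + k) * rw \<alpha> \<gamma> k"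
  unfolding rw_def prod.distrib[symmetric]
  by (intro prod_mono conjI) (simp_all add: less_imp_le[OF r1_pos] r1_submult assms)

lemma r1_le_mult_power_decay:
  assumes "0 \<le> \<beta>" "0 < \<gamma>" "\<gamma> \<le> 1"
  shows "r1 \<beta> \<gamma> h \<le> r1 \<alpha> \<gamma> h * power_decay (2 * (\<alpha> - \<beta>)) h"
proof (cases "h = 0")
  case True
  then show ?thesis by (simp add: r1_def power_decay_def)
next
  case False
  define x where "x = real_of_int \<bar>h\<bar>"
  have "x \<ge> 1"
    using False by (simp add: x_def)
  have "1 \<le> x powr (2 * \<beta>)"
    using \<open>x \<ge> 1\<close> assms by (intro ge_one_powr_ge_zero) auto
  also have "\<dots> \<le> x powr (2 * \<beta>) / \<gamma>"
    using assms by (simp add: le_divide_eq mult_left_le)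
  finally have "r1 \<beta> \<gamma> h = x powr (2 * \<alpha>) / \<gamma> * x powr (- (2 * (\<alpha> - \<beta>)))"
    by (simp add: r1_def x_def powr_add[symmetric])
  also have "\<dots> \<le> r1 \<alpha> \<gamma> h * x powr (- (2 * (\<alpha> - \<beta>)))"
    unfolding x_def by (intro mult_right_mono r1_ge_powr) simp
  also have "\<dots> = r1 \<alpha> \<gamma> h * power_decay (2 * (\<alpha> - \<beta>)) h"
    using False by (simp add: power_decay_def x_def)
  finally show ?thesis .
qed

lemma rw_le_mult_power_decay:
  assumes "0 \<le> \<beta>" "\<And>j. 0 < \<gamma>$j \<and> \<gamma>$j \<le> 1"
  shows "rw \<beta> \<gamma> m \<le> rw \<alpha> \<gamma> m * (\<Prod>j\<in>UNIV. power_decay (2 * (\<alpha> - \<beta>)) (m$j))"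
  unfolding rw_def prod.distrib[symmetric]
  by (intro prod_mono conjI r1_le_mult_power_decay) (simp_all add: assms less_imp_le[OF r1_pos])

lemma omega_add: "omega (m + k) x = omega m x * omega k x"
proof -
  have "(\<Sum>j\<in>UNIV. real_of_int ((m + k)$j) * x$j)
      = (\<Sum>j\<in>UNIV. real_of_int (m$j) * x$j) + (\<Sum>j\<in>UNIV. real_of_int (k$j) * x$j)"
    by (simp add: distrib_right sum.distrib)
  then show ?thesis
    unfolding omega_def by (simp add: distrib_left exp_add[symmetric])
qed

lemma norm_omega [simp]: "norm (omega k x) = 1"
proof -
  have "omega k x = exp (\<i> * complex_of_real (2 * pi * (\<Sum>j\<in>UNIV. real_of_int (k$j) * x$j)))"
    unfolding omega_def by (simp add: mult_ac)
  then show ?thesis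
    by simp
qed

lemma borel_measurable_omega [measurable]: "omega k \<in> borel_measurable borel"
  unfolding omega_def by measurable

lemma cnj_omega: "cnj (omega k x) = omega (- k) x"
  unfolding omega_def by (simp add: exp_cnj sum_negf)

lemma norm_phi_check_le: "norm (phi_check N xs c k) \<le> mu_bar N c"
proof -
  have "norm (\<Sum>n=1..N. complex_of_real (c n) * omega k (xs n)) \<le> (\<Sum>n=1..N. \<bar>c n\<bar>)"
    by (rule order_trans[OF norm_sum]) (simp add: norm_mult)
  then show ?thesis
    unfolding phi_check_def mu_bar_def norm_mult by (simp add: norm_divide divide_right_mono)
qed

lemma norm_phiK_le: "norm (phiK K N xs c x) \<le> (\<Sum>k\<in>K. norm (phi_check N xs c k))"
  unfolding phiK_def by (rule order_trans[OF norm_sum]) (simp add: norm_mult)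

lemma borel_measurable_phiK [measurable]: "phiK K N xs c \<in> borel_measurable borel"
  unfolding phiK_def cnj_omega by measurable

lemma set_borel_measurable_L2_cube_mult:
  assumes "f \<in> L2_cube" and [measurable]: "h \<in> borel_measurable borel"
  shows "set_borel_measurable lborel unit_cube (\<lambda>x. f x * h x)"
proof -
  have [measurable]: "(\<lambda>x. indicator unit_cube x *\<^sub>R f x) \<in> borel_measurable lborel"
    using assms(1) by (simp add: L2_cube_def set_borel_measurable_def)
  have "(\<lambda>x. (indicator unit_cube x *\<^sub>R f x) * h x) \<in> borel_measurable lborel"
    by measurable
  then show ?thesis
    by (simp add: set_borel_measurable_def mult.assoc)
qed

lemma set_integrable_L2_cube:
  assumes "f \<in> L2_cube"
  shows "set_integrable lborel unit_cube f"
proof (rule set_integrable_bound)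
  have "set_integrable lborel unit_cube (\<lambda>_. 1 :: real)"
    unfolding set_integrable_def unit_cube_def
    by (simp add: emeasure_lborel_cbox_finite)
  then show "set_integrable lborel unit_cube (\<lambda>x. 1 + (cmod (f x))\<^sup>2)"
    using assms by (intro set_integral_add) (simp_all add: L2_cube_def)
  show "set_borel_measurable lborel unit_cube f"
    using assms by (simp add: L2_cube_def)
  have "t \<le> 1 + t\<^sup>2" for t :: real
    using zero_le_power2[of "t - 1"] zero_le_power2[of t] unfolding power2_diff power_one mult_1_right by linarith
  then show "AE x in lborel. x \<in> unit_cube \<longrightarrow> norm (f x) \<le> norm (1 + (cmod (f x))\<^sup>2)"
    by simp
qed

lemma set_integrable_L2_cube_mult_bounded:
  assumes "f \<in> L2_cube" "h \<in> borel_measurable borel" "\<And>x. norm (h x) \<le> B"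
  shows "set_integrable lborel unit_cube (\<lambda>x. f x * h x)"
proof (rule set_integrable_bound)
  show "set_integrable lborel unit_cube (\<lambda>x. complex_of_real B * f x)"
    using set_integrable_L2_cube[OF assms(1)] by simp
  show "set_borel_measurable lborel unit_cube (\<lambda>x. f x * h x)"
    by (rule set_borel_measurable_L2_cube_mult[OF assms(1,2)])
  have "0 \<le> B"
    using assms(3) norm_ge_zero order_trans by blast
  have "norm (f x * h x) \<le> norm (complex_of_real B * f x)" for x
    using mult_left_mono[OF assms(3)[of x], of "norm (f x)"] \<open>0 \<le> B\<close> by (simp add: norm_mult mult.commute)
  then show "AE x in lborel. x \<in> unit_cube \<longrightarrow> norm (f x * h x) \<le> norm (complex_of_real B * f x)"
    by simp
qed

lemma L2_cube_mult_bounded: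
  assumes "f \<in> L2_cube" "h \<in> borel_measurable borel" "\<And>x. norm (h x) \<le> B"
  shows "(\<lambda>x. f x * h x) \<in> L2_cube"
proof -
  have "set_integrable lborel unit_cube (\<lambda>x. (cmod (f x * h x))\<^sup>2)"
  proof (rule set_integrable_bound)
    show "set_integrable lborel unit_cube (\<lambda>x. B\<^sup>2 * (cmod (f x))\<^sup>2)"
      using assms(1) by (simp add: L2_cube_def)
    have "(\<lambda>x. (norm (indicator unit_cube x *\<^sub>R (f x * h x)))\<^sup>2) \<in> borel_measurable lborel"
      using set_borel_measurable_L2_cube_mult[OF assms(1,2)]
      unfolding set_borel_measurable_def by measurable
    moreover have "(\<lambda>x. (norm (indicator unit_cube x *\<^sub>R (f x * h x)))\<^sup>2)
        = (\<lambda>x. indicator unit_cube x *\<^sub>R (cmod (f x * h x))\<^sup>2)"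
      by (auto simp: indicator_def)
    ultimately show "set_borel_measurable lborel unit_cube (\<lambda>x. (cmod (f x * h x))\<^sup>2)"
      by (simp add: set_borel_measurable_def)
    have "(cmod (f x * h x))\<^sup>2 \<le> B\<^sup>2 * (cmod (f x))\<^sup>2" for x
      using mult_left_mono[OF assms(3)[of x], of "norm (f x)"]
      by (simp add: norm_mult power_mult_distrib[symmetric] mult.commute power_mono)
    then show "AE x in lborel. x \<in> unit_cube \<longrightarrow>
        norm ((cmod (f x * h x))\<^sup>2) \<le> norm (B\<^sup>2 * (cmod (f x))\<^sup>2)"
      by simp
  qed
  then show ?thesis
    using set_borel_measurable_L2_cube_mult[OF assms(1,2)] by (simp add: L2_cube_def)
qed

lemma fourier_coeff_mult_phiK:
  assumes g: "g \<in> L2_cube"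
  shows "fourier_coeff (\<lambda>x. g x * phiK K N xs c x) m
       = (\<Sum>k\<in>K. phi_check N xs c k * fourier_coeff g (m + k))"
proof -
  let ?I = "\<lambda>k x. indicator unit_cube x *\<^sub>R (g x * cnj (omega (m + k) x))"
  have integrable: "integrable lborel (?I k)" for k
    using set_integrable_L2_cube_mult_bounded[OF g, of "omega (- (m + k))" 1]
    unfolding set_integrable_def by (simp add: cnj_omega)
  have "fourier_coeff (\<lambda>x. g x * phiK K N xs c x) m
      = integral\<^sup>L lborel (\<lambda>x. \<Sum>k\<in>K. phi_check N xs c k * ?I k x)"
    unfolding fourier_coeff_def set_lebesgue_integral_def phiK_def omega_add
    by (simp add: sum_distrib_left sum_distrib_right scaleR_sum_right mult_ac)
  also have "\<dots> = (\<Sum>k\<in>K. integral\<^sup>L lborel (\<lambda>x. phi_check N xs c k * ?I k x))"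
    by (intro Bochner_Integration.integral_sum Bochner_Integration.integrable_mult_right integrable)
  also have "\<dots> = (\<Sum>k\<in>K. phi_check N xs c k * integral\<^sup>L lborel (?I k))"
    by (simp only: integral_mult_right_zero)
  finally show ?thesis
    unfolding fourier_coeff_def set_lebesgue_integral_def .
qed

lemma sum_shift_le_infsum:
  fixes f :: "'a::cancel_semigroup_add \<Rightarrow> real"
  assumes "f summable_on UNIV" "\<And>x. 0 \<le> f x" "finite K"
  shows "(\<Sum>k\<in>K. f (m + k)) \<le> infsum f UNIV"
proof -
  have "(\<Sum>k\<in>K. f (m + k)) = sum f ((+) m ` K)"
    by (simp add: sum.reindex inj_on_def)
  also have "\<dots> \<le> infsum f UNIV"
    using assms by (intro finite_sum_le_infsum) auto
  finally show ?thesis .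
qed

lemma sqrt_rw_submult:
  assumes "\<alpha> > 0" "\<And>j. \<gamma>$j > 0"
  shows "sqrt (rw \<alpha> \<gamma> m) \<le> c_const \<alpha> \<gamma> * (sqrt (rw \<alpha> \<gamma> k) * sqrt (rw \<alpha> \<gamma> (m + k)))"
  using real_sqrt_le_mono[OF rw_submult[OF assms, of m k]]
  by (simp add: c_const_def real_sqrt_mult mult_ac)

lemma rw_convolution_le:
  fixes G a :: "int^'d::finite \<Rightarrow> complex"
  assumes "finite K" "\<alpha> > 0" "\<And>j. \<gamma>$j > 0"
    and summable: "(\<lambda>k. rw \<alpha> \<gamma> k * (cmod (G k))\<^sup>2) summable_on UNIV"
    and a_le: "\<And>k. norm (a k) \<le> \<mu>"
  shows "rw \<alpha> \<gamma> m * (cmod (\<Sum>k\<in>K. a k * G (m + k)))\<^sup>2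
     \<le> (\<mu> * c_const \<alpha> \<gamma>)\<^sup>2 * (\<Sum>k\<in>K. rw \<alpha> \<gamma> k) * (\<Sum>\<^sub>\<infinity>k. rw \<alpha> \<gamma> k * (cmod (G k))\<^sup>2)"
proof -
  define s where "s k = sqrt (rw \<alpha> \<gamma> k)" for k
  define A where "A k = cmod (G (m + k))" for k
  define T where "T = (\<Sum>k\<in>K. s k * (s (m + k) * A k))"
  have "0 \<le> \<mu>"
    using a_le norm_ge_zero order_trans by blast
  have "s m * cmod (\<Sum>k\<in>K. a k * G (m + k)) \<le> s m * (\<Sum>k\<in>K. \<mu> * A k)"
    unfolding A_def s_def
    by (intro mult_left_mono order_trans[OF norm_sum] sum_mono) (simp_all add: norm_mult mult_right_mono a_le)
  also have "\<dots> = \<mu> * (\<Sum>k\<in>K. s m * A k)"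
    by (simp add: sum_distrib_left mult_ac)
  also have "\<dots> \<le> \<mu> * (c_const \<alpha> \<gamma> * T)"
    unfolding T_def sum_distrib_left s_def A_def using \<open>0 \<le> \<mu>\<close> sqrt_rw_submult[OF assms(2,3)]
    by (intro mult_left_mono sum_mono) (simp_all add: mult_right_mono mult.assoc[symmetric])
  finally have le_T: "s m * cmod (\<Sum>k\<in>K. a k * G (m + k)) \<le> \<mu> * c_const \<alpha> \<gamma> * T"
    by (simp add: mult.assoc)
  have "T\<^sup>2 \<le> (\<Sum>k\<in>K. (s k)\<^sup>2) * (\<Sum>k\<in>K. (s (m + k) * A k)\<^sup>2)"
    unfolding T_def by (rule Cauchy_Schwarz_ineq_sum)
  also have "\<dots> = (\<Sum>k\<in>K. rw \<alpha> \<gamma> k) * (\<Sum>k\<in>K. rw \<alpha> \<gamma> (m + k) * (cmod (G (m + k)))\<^sup>2)"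
    by (simp add: s_def A_def power_mult_distrib)
  also have "\<dots> \<le> (\<Sum>k\<in>K. rw \<alpha> \<gamma> k) * (\<Sum>\<^sub>\<infinity>k. rw \<alpha> \<gamma> k * (cmod (G k))\<^sup>2)"
    using assms(1) summable by (intro mult_left_mono sum_shift_le_infsum sum_nonneg) auto
  finally have T_le: "T\<^sup>2 \<le> (\<Sum>k\<in>K. rw \<alpha> \<gamma> k) * (\<Sum>\<^sub>\<infinity>k. rw \<alpha> \<gamma> k * (cmod (G k))\<^sup>2)" .
  have "rw \<alpha> \<gamma> m * (cmod (\<Sum>k\<in>K. a k * G (m + k)))\<^sup>2 = (s m * cmod (\<Sum>k\<in>K. a k * G (m + k)))\<^sup>2"
    by (simp add: s_def power_mult_distrib)
  also have "\<dots> \<le> (\<mu> * c_const \<alpha> \<gamma> * T)\<^sup>2"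
    using le_T by (intro power_mono) (simp_all add: s_def)
  also have "\<dots> \<le> (\<mu> * c_const \<alpha> \<gamma>)\<^sup>2 * ((\<Sum>k\<in>K. rw \<alpha> \<gamma> k) * (\<Sum>\<^sub>\<infinity>k. rw \<alpha> \<gamma> k * (cmod (G k))\<^sup>2))"
    unfolding power_mult_distrib[of _ T] by (intro mult_left_mono T_le) simp
  finally show ?thesis
    by (simp add: mult.assoc)
qed

lemma korobov_norm_nonneg: "0 \<le> korobov_norm \<beta> \<gamma> f"
  by (simp add: korobov_norm_def infsum_nonneg)

lemma rw_fourier_coeff_mult_phiK_le:
  assumes "\<alpha> > 0" "\<And>j. \<gamma>$j > 0" "finite K" "g \<in> korobov_space \<alpha> \<gamma>"
  shows "rw \<alpha> \<gamma> m * (cmod (fourier_coeff (\<lambda>x. g x * phiK K N xs c x) m))\<^sup>2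
    \<le> (korobov_norm \<alpha> \<gamma> g * sqrt (\<Sum>k\<in>K. rw \<alpha> \<gamma> k) * c_const \<alpha> \<gamma> * mu_bar N c)\<^sup>2"
proof -
  have g: "g \<in> L2_cube" "(\<lambda>k. rw \<alpha> \<gamma> k * (cmod (fourier_coeff g k))\<^sup>2) summable_on UNIV"
    using assms(4) by (simp_all add: korobov_space_def)
  have "(korobov_norm \<alpha> \<gamma> g)\<^sup>2 = (\<Sum>\<^sub>\<infinity>k. rw \<alpha> \<gamma> k * (cmod (fourier_coeff g k))\<^sup>2)"
    by (simp add: korobov_norm_def infsum_nonneg)
  moreover have "(sqrt (\<Sum>k\<in>K. rw \<alpha> \<gamma> k))\<^sup>2 = (\<Sum>k\<in>K. rw \<alpha> \<gamma> k)"
    by (simp add: sum_nonneg)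
  ultimately show ?thesis
    unfolding fourier_coeff_mult_phiK[OF g(1)]
    using rw_convolution_le[OF assms(3,1,2) g(2) norm_phi_check_le]
    by (simp add: power_mult_distrib mult_ac)
qed

lemma korobov_space_of_uniform_coeff_bound:
  fixes f :: "real^'d::finite \<Rightarrow> complex"
  assumes "f \<in> L2_cube" "0 \<le> \<beta>" "1 < 2 * (\<alpha> - \<beta>)" "\<And>j. 0 < \<gamma>$j \<and> \<gamma>$j \<le> 1"
    and bound: "\<And>m. rw \<alpha> \<gamma> m * (cmod (fourier_coeff f m))\<^sup>2 \<le> B\<^sup>2"
  shows "f \<in> korobov_space \<beta> \<gamma> \<and>
    korobov_norm \<beta> \<gamma> f \<le> \<bar>B\<bar> * sqrt ((1 + 2 * rzeta (2 * (\<alpha> - \<beta>))) ^ CARD('d))"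
proof -
  define s where "s = 2 * (\<alpha> - \<beta>)"
  define w where "w m = (\<Prod>j\<in>UNIV. power_decay s (m$j))" for m :: "int^'d"
  define W where "W = (1 + 2 * rzeta s) ^ CARD('d)"
  have "s > 1"
    using assms(3) by (simp add: s_def)
  then have "(w has_sum W) UNIV"
    unfolding w_def W_def using rzeta_nonneg[of s]
    by (intro has_sum_prod_vec_nth power_decay_has_sum power_decay_nonneg) simp_all
  then have B_w: "((\<lambda>m. B\<^sup>2 * w m) has_sum (B\<^sup>2 * W)) UNIV"
    by (rule has_sum_cmult_right)
  have le: "rw \<beta> \<gamma> m * (cmod (fourier_coeff f m))\<^sup>2 \<le> B\<^sup>2 * w m" for m
  proof -
    have "rw \<beta> \<gamma> m * (cmod (fourier_coeff f m))\<^sup>2 \<le> rw \<alpha> \<gamma> m * w m * (cmod (fourier_coeff f m))\<^sup>2"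
      unfolding w_def s_def by (intro mult_right_mono rw_le_mult_power_decay assms(2,4)) simp
    also have "\<dots> = w m * (rw \<alpha> \<gamma> m * (cmod (fourier_coeff f m))\<^sup>2)"
      by (simp add: mult_ac)
    also have "\<dots> \<le> w m * B\<^sup>2"
      unfolding w_def by (intro mult_left_mono bound prod_nonneg power_decay_nonneg)
    finally show ?thesis
      by (simp add: mult.commute)
  qed
  have summable: "(\<lambda>m. rw \<beta> \<gamma> m * (cmod (fourier_coeff f m))\<^sup>2) summable_on UNIV"
    by (rule summable_on_comparison_test[OF has_sum_imp_summable[OF B_w] le]) simp
  then have "(\<Sum>\<^sub>\<infinity>m. rw \<beta> \<gamma> m * (cmod (fourier_coeff f m))\<^sup>2) \<le> B\<^sup>2 * W"
    using infsum_mono[OF summable has_sum_imp_summable[OF B_w] le] infsumI[OF B_w] by simp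
  then have "korobov_norm \<beta> \<gamma> f \<le> sqrt (B\<^sup>2 * W)"
    unfolding korobov_norm_def by (rule real_sqrt_le_mono)
  also have "\<dots> = \<bar>B\<bar> * sqrt W"
    by (simp add: real_sqrt_mult)
  finally show ?thesis
    using assms(1) summable by (simp add: korobov_space_def W_def s_def)
qed

lemma zeta_const_eq_sqrt:
  assumes "\<delta> > 0"
  shows "zeta_const \<delta> d = sqrt ((1 + 2 * rzeta (1 + 2 * \<delta>)) ^ d)"
proof -
  have "1 + 2 * rzeta (1 + 2 * \<delta>) > 0"
    using rzeta_nonneg[of "1 + 2 * \<delta>"] assms by simp
  then show ?thesis
    by (simp add: zeta_const_def powr_realpow[symmetric] powr_half_sqrt[symmetric] powr_powr)
qed

theorem lemma3p6:
  fixes \<alpha> :: real and \<gamma> :: "real^('d::{finite,linorder})"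
    and N :: nat and xs :: "nat \<Rightarrow> real^('d::{finite,linorder})" and c :: "nat \<Rightarrow> real"
    and K :: "(int^('d::{finite,linorder})) set" and g :: "real^('d::{finite,linorder}) \<Rightarrow> complex"
  assumes "\<alpha> > 1"
    and "\<And>j. 0 < \<gamma>$j \<and> \<gamma>$j \<le> 1"
    and "\<And>i j. i \<le> j \<Longrightarrow> \<gamma>$j \<le> \<gamma>$i"
    and "\<And>n. n \<in> {1..N} \<Longrightarrow> xs n \<in> unit_cube"
    and "finite K"
    and "g \<in> korobov_space \<alpha> \<gamma>"
  shows "\<forall>\<delta>. 0 < \<delta> \<and> \<delta> < \<alpha> - 1 \<longrightarrow>
     (\<lambda>x. g x * phiK K N xs c x) \<in> korobov_space (\<alpha> - 1/2 - \<delta>) \<gamma> \<and>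
     korobov_norm (\<alpha> - 1/2 - \<delta>) \<gamma> (\<lambda>x. g x * phiK K N xs c x)
       \<le> korobov_norm \<alpha> \<gamma> g * sqrt (\<Sum>k\<in>K. rw \<alpha> \<gamma> k)
         * c_const \<alpha> \<gamma> * zeta_const \<delta> CARD('d::{finite,linorder}) * mu_bar N c"
proof (intro allI impI)
  fix \<delta> :: real
  assume \<delta>: "0 < \<delta> \<and> \<delta> < \<alpha> - 1"
  define B where "B = korobov_norm \<alpha> \<gamma> g * sqrt (\<Sum>k\<in>K. rw \<alpha> \<gamma> k) * c_const \<alpha> \<gamma> * mu_bar N c"
  have "0 \<le> B"
    unfolding B_def c_const_def mu_bar_def
    by (intro mult_nonneg_nonneg korobov_norm_nonneg sum_nonneg real_sqrt_ge_zero prod_nonneg) auto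
  have "g \<in> L2_cube"
    using assms(6) by (simp add: korobov_space_def)
  then have L2: "(\<lambda>x. g x * phiK K N xs c x) \<in> L2_cube"
    by (rule L2_cube_mult_bounded[OF _ borel_measurable_phiK norm_phiK_le])
  have coeff: "rw \<alpha> \<gamma> m * (cmod (fourier_coeff (\<lambda>x. g x * phiK K N xs c x) m))\<^sup>2 \<le> B\<^sup>2" for m
    unfolding B_def using assms(1,2,5,6) by (intro rw_fourier_coeff_mult_phiK_le) auto
  have smoothness: "2 * (\<alpha> - (\<alpha> - 1/2 - \<delta>)) = 1 + 2 * \<delta>"
    by simp
  show "(\<lambda>x. g x * phiK K N xs c x) \<in> korobov_space (\<alpha> - 1/2 - \<delta>) \<gamma> \<and>
     korobov_norm (\<alpha> - 1/2 - \<delta>) \<gamma> (\<lambda>x. g x * phiK K N xs c x)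
       \<le> korobov_norm \<alpha> \<gamma> g * sqrt (\<Sum>k\<in>K. rw \<alpha> \<gamma> k)
         * c_const \<alpha> \<gamma> * zeta_const \<delta> CARD('d) * mu_bar N c"
    using korobov_space_of_uniform_coeff_bound[OF L2 _ _ assms(2) coeff, where \<beta> = "\<alpha> - 1/2 - \<delta>", unfolded smoothness]
      assms(1) \<delta> \<open>0 \<le> B\<close> zeta_const_eq_sqrt[of \<delta> "CARD('d)"]
    by (simp add: B_def mult_ac)
qed

end
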